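(* Let $(\bm M_s)$ be a sequence of parameters with $\bm M_s\in\mathcal M$ for every index $s$. Then for every $t$ and every $k=1,\dots,2H$, $$\|\Phi^x_k(\bm M_{t-H:t-1})\|_2\le\kappa^2(1-\gamma)^{k-1}\mathds1_{(k\le H)}+\phi H(1-\gamma)^{k-2}\mathds1_{(k\ge2)},$$ $$\|\Phi^u_k(\bm M_{t-H:t})\|_2\le\kappa^3(1-\gamma)^{k-1}\mathds1_{(k\le H)}(2\sqrt{nm}+1)+\kappa\phi H(1-\gamma)^{k-2}\mathds1_{(k\ge2)},$$ where $\phi=2\kappa^5\kappa_B\sqrt{mn}$.
   Context: $A\in\mathbb R^{n\times n}$, $B\in\mathbb R^{n\times m}$; matrix $\|\cdot\|_\infty$ = max absolute row sum, $\|\cdot\|_2$ spectral norm. For $\kappa\ge1$, $\gamma\in(0,1]$, $K$ is $(\kappa,\gamma)$-strongly stable if $A-BK=Q^{-1}LQ$ with $\|L\|_2\le1-\gamma$ and $\max(\|Q\|_2,\|Q^{-1}\|_2,\|K\|_2)\le\kappa$; $\kappa_B=\max(\|B\|_2,1)$. Fix a $(\kappa,\gamma)$-strongly stable $\mathbb K$, $A_{\mathbb K}=A-B\mathbb K$, and $H\ge1$. A parameter is a list $\bm M=(M^{[1]},\dots,M^{[H]})$, $M^{[i]}\in\mathbb R^{m\times n}$; $\mathcal M=\{\bm M:\|M^{[i]}\|_\infty\le2\sqrt n\kappa^3(1-\gamma)^{i-1},\ 1\le i\le H\}$. For a time-indexed sequence of parameters, $\Phi^x_k(\bm M_{t-H:t-1})=A_{\mathbb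 K}^{k-1}\mathds1_{(k\le H)}+\sum_{i=1}^HA_{\mathbb K}^{i-1}BM_{t-i}^{[k-i]}\mathds1_{(1\le k-i\le H)}$ and $\Phi^u_k(\bm M_{t-H:t})=M_t^{[k]}\mathds1_{(k\le H)}-\mathbb K\Phi^x_k(\bm M_{t-H:t-1})$; $\mathds1_{(\cdot)}$ is the indicator (terms with indicator $0$ are omitted). *)

theory Defs
  imports "HOL-Analysis.Analysis"
begin

definition spec_norm :: "real^'c^'r \<Rightarrow> real" where
  "spec_norm A = onorm (\<lambda>x. A *v x)"

definition inf_norm :: "real^'c^'r \<Rightarrow> real" where
  "inf_norm A = Max (range (\<lambda>i. \<Sum>j\<in>UNIV. \<bar>A $ i $ j\<bar>))"

definition mat_pow :: "real^'n^'n \<Rightarrow> nat \<Rightarrow> real^'n^'n" where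
  "mat_pow A k = (((**) A) ^^ k) (mat 1)"

definition strongly_stable ::
  "real \<Rightarrow> real \<Rightarrow> real^'n^'n \<Rightarrow> real^'m^'n \<Rightarrow> real^'n^'m \<Rightarrow> bool" where
  "strongly_stable \<kappa> \<gamma> A B K \<longleftrightarrow>
     (\<exists>Q L :: real^'n^'n. invertible Q \<and> A - B ** K = matrix_inv Q ** L ** Q \<and>
        spec_norm L \<le> 1 - \<gamma> \<and>
        spec_norm Q \<le> \<kappa> \<and> spec_norm (matrix_inv Q) \<le> \<kappa> \<and> spec_norm K \<le> \<kappa>)"

definition ind :: "bool \<Rightarrow> real" where
  "ind P = (if P then 1 else 0)"

text \<open>Parameters: \<open>Ms s i\<close> is \<open>M_s^{[i]}\<close> for \<open>1 \<le> i \<le> H\<close>; time indices are integers.\<close>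
definition in_Mset :: "real \<Rightarrow> real \<Rightarrow> nat \<Rightarrow> (nat \<Rightarrow> real^'n^'m) \<Rightarrow> bool" where
  "in_Mset \<kappa> \<gamma> H M \<longleftrightarrow>
     (\<forall>i\<in>{1..H}. inf_norm (M i) \<le> 2 * sqrt (real CARD('n)) * \<kappa>^3 * (1 - \<gamma>)^(i-1))"

definition Phi_x ::
  "real^'n^'n \<Rightarrow> real^'m^'n \<Rightarrow> nat \<Rightarrow> (int \<Rightarrow> nat \<Rightarrow> real^'n^'m) \<Rightarrow> int \<Rightarrow> nat \<Rightarrow> real^'n^'n" where
  "Phi_x AK B H Ms t k =
     (if k \<le> H then mat_pow AK (k-1) else 0) +
     (\<Sum>i\<in>{1..H}. if 1 \<le> k - i \<and> k - i \<le> H \<and> i < k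
                   then mat_pow AK (i-1) ** B ** Ms (t - int i) (k - i) else 0)"

definition Phi_u ::
  "real^'n^'n \<Rightarrow> real^'m^'n \<Rightarrow> real^'n^'m \<Rightarrow> nat \<Rightarrow> (int \<Rightarrow> nat \<Rightarrow> real^'n^'m) \<Rightarrow> int \<Rightarrow> nat \<Rightarrow> real^'n^'m" where
  "Phi_u AK B K H Ms t k =
     (if k \<le> H then Ms t k else 0) - K ** Phi_x AK B H Ms t k"

end

theory Submission
  imports Defs
begin

text \<open>Conjugating by \<open>Q\<close> turns powers of \<open>A - B K = Q\<inverse> L Q\<close> into powers of the
  contraction \<open>L\<close>, so \<open>||(A - B K)^j||\<^sub>2 \<le> \<kappa>^2 (1 - \<gamma>)^j\<close>; and \<open>||M||\<^sub>2 \<le> sqrt m ||M||\<^sub>\<infinity>\<close>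
  turns the constraint defining the parameter set into \<open>||M\<^sup>[\<^sup>i\<^sup>]||\<^sub>2 \<le> 2 sqrt (m n) \<kappa>^3 (1 - \<gamma>)^(i-1)\<close>.
  Each of the at most \<open>H\<close> summands \<open>(A - B K)^(i-1) B M\<^sup>[\<^sup>k\<^sup>-\<^sup>i\<^sup>]\<close> of \<open>\<Phi>\<^sup>x\<^sub>k\<close> therefore has
  norm at most \<open>\<phi> (1 - \<gamma>)^(k-2)\<close>, and \<open>\<Phi>\<^sup>u\<^sub>k\<close> costs one more factor \<open>||K||\<^sub>2 \<le> \<kappa>\<close>.\<close>

lemma norm_matrix_vector_mult_le_spec_norm: "norm (A *v x) \<le> spec_norm A * norm x"
  unfolding spec_norm_def by (rule onorm) simp

lemma spec_norm_le:
  fixes A :: "real^'c^'r"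
  assumes "\<And>x. norm (A *v x) \<le> b * norm x"
  shows "spec_norm A \<le> b"
  unfolding spec_norm_def by (rule onorm_le) (rule assms)

lemma spec_norm_nonneg: "0 \<le> spec_norm A"
  unfolding spec_norm_def by (rule onorm_pos_le) simp

lemma spec_norm_zero [simp]: "spec_norm (0::real^'c^'r) = 0"
  by (rule antisym[OF spec_norm_le spec_norm_nonneg]) simp

lemma spec_norm_mat_1_le: "spec_norm (mat 1 :: real^'n^'n) \<le> 1"
  by (rule spec_norm_le) simp

lemma spec_norm_matrix_mul_le: "spec_norm (A ** B) \<le> spec_norm A * spec_norm B"
proof (rule spec_norm_le)
  fix x
  have "norm ((A ** B) *v x) = norm (A *v (B *v x))"
    by (simp add: matrix_vector_mul_assoc)
  also have "\<dots> \<le> spec_norm A * norm (B *v x)"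
    by (rule norm_matrix_vector_mult_le_spec_norm)
  also have "\<dots> \<le> spec_norm A * (spec_norm B * norm x)"
    by (intro mult_left_mono norm_matrix_vector_mult_le_spec_norm spec_norm_nonneg)
  finally show "norm ((A ** B) *v x) \<le> spec_norm A * spec_norm B * norm x"
    by (simp add: mult.assoc)
qed

lemma spec_norm_matrix_mul3_le:
  "spec_norm (A ** B ** C) \<le> spec_norm A * spec_norm B * spec_norm C"
  by (meson order_trans spec_norm_matrix_mul_le mult_right_mono spec_norm_nonneg)

lemma spec_norm_triangle: "spec_norm (A + B) \<le> spec_norm A + spec_norm B"
proof (rule spec_norm_le)
  fix x
  have "norm ((A + B) *v x) \<le> norm (A *v x) + norm (B *v x)"
    by (simp add: matrix_vector_mult_add_rdistrib norm_triangle_ineq)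
  also have "\<dots> \<le> spec_norm A * norm x + spec_norm B * norm x"
    by (intro add_mono norm_matrix_vector_mult_le_spec_norm)
  finally show "norm ((A + B) *v x) \<le> (spec_norm A + spec_norm B) * norm x"
    by (simp add: algebra_simps)
qed

lemma spec_norm_triangle_diff: "spec_norm (A - B) \<le> spec_norm A + spec_norm B"
proof (rule spec_norm_le)
  fix x
  have "norm ((A - B) *v x) \<le> norm (A *v x) + norm (B *v x)"
    by (simp add: matrix_vector_mult_diff_rdistrib norm_triangle_ineq4)
  also have "\<dots> \<le> spec_norm A * norm x + spec_norm B * norm x"
    by (intro add_mono norm_matrix_vector_mult_le_spec_norm)
  finally show "norm ((A - B) *v x) \<le> (spec_norm A + spec_norm B) * norm x"
    by (simp add: algebra_simps)
qed

lemma spec_norm_sum_le: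
  fixes f :: "'i \<Rightarrow> real^'c^'r"
  shows "spec_norm (sum f S) \<le> (\<Sum>s\<in>S. spec_norm (f s))"
proof (induction S rule: infinite_finite_induct)
  case (insert a S)
  then show ?case using spec_norm_triangle[of "f a" "sum f S"] by simp
qed simp_all

lemma spec_norm_if_zero: "spec_norm (if P then A else 0) = spec_norm A * ind P"
  by (simp add: ind_def)

lemma spec_norm_le_sqrt_card_rows_inf_norm:
  fixes M :: "real^'n^'m"
  shows "spec_norm M \<le> sqrt (real CARD('m)) * inf_norm M"
proof (rule spec_norm_le)
  fix x :: "real^'n"
  have row: "(\<Sum>j\<in>UNIV. \<bar>M $ i $ j\<bar>) \<le> inf_norm M" for i
    unfolding inf_norm_def by (rule Max_ge) auto
  then have inf_norm_nonneg: "0 \<le> inf_norm M"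
    by (meson order_trans sum_nonneg abs_ge_zero)
  have component: "\<bar>(M *v x) $ i\<bar> \<le> inf_norm M * norm x" for i
  proof -
    have "\<bar>(M *v x) $ i\<bar> \<le> (\<Sum>j\<in>UNIV. \<bar>M $ i $ j\<bar> * \<bar>x $ j\<bar>)"
      unfolding matrix_vector_mult_def by (simp add: order_trans[OF sum_abs] abs_mult)
    also have "\<dots> \<le> (\<Sum>j\<in>UNIV. \<bar>M $ i $ j\<bar>) * norm x"
      unfolding sum_distrib_right
      by (intro sum_mono mult_left_mono component_le_norm_cart) auto
    also have "\<dots> \<le> inf_norm M * norm x"
      using row by (simp add: mult_right_mono)
    finally show ?thesis .
  qed
  have "norm (M *v x) ^ 2 = (\<Sum>i\<in>UNIV. ((M *v x) $ i)^2)"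
    by (simp add: norm_vec_def L2_set_def sum_nonneg)
  also have "\<dots> \<le> (\<Sum>i\<in>(UNIV::'m set). (inf_norm M * norm x)^2)"
    by (intro sum_mono) (metis component abs_ge_zero power2_abs power_mono)
  also have "\<dots> = (sqrt (real CARD('m)) * inf_norm M * norm x)^2"
    by (simp add: power_mult_distrib)
  finally show "norm (M *v x) \<le> sqrt (real CARD('m)) * inf_norm M * norm x"
    by (rule power2_le_imp_le) (simp add: inf_norm_nonneg)
qed

lemma mat_pow_Suc: "mat_pow A (Suc j) = A ** mat_pow A j"
  by (simp add: mat_pow_def)

lemma mat_pow_similar:
  fixes Q Qi L :: "real^'n^'n"
  assumes "Q ** Qi = mat 1"
  shows "mat_pow (Qi ** L ** Q) (Suc j) = Qi ** mat_pow L (Suc j) ** Q"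
proof (induction j)
  case 0
  then show ?case by (simp add: mat_pow_def)
next
  case (Suc j)
  have "mat_pow (Qi ** L ** Q) (Suc (Suc j)) = Qi ** L ** (Q ** Qi) ** mat_pow L (Suc j) ** Q"
    using Suc by (simp add: mat_pow_Suc matrix_mul_assoc)
  then show ?case
    using assms by (simp add: matrix_mul_assoc mat_pow_Suc)
qed

lemma spec_norm_mat_pow_le:
  assumes "spec_norm L \<le> c"
  shows "spec_norm (mat_pow L j) \<le> c ^ j"
proof (induction j)
  case 0
  then show ?case using spec_norm_mat_1_le by (simp add: mat_pow_def)
next
  case (Suc j)
  have "spec_norm (mat_pow L (Suc j)) \<le> spec_norm L * spec_norm (mat_pow L j)"
    unfolding mat_pow_Suc by (rule spec_norm_matrix_mul_le)
  also have "\<dots> \<le> c * c ^ j"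
    using assms spec_norm_nonneg[of L] by (intro mult_mono Suc spec_norm_nonneg) auto
  finally show ?case by simp
qed

lemma strongly_stable_spec_norm_mat_pow_le:
  fixes A :: "real^'n^'n" and B :: "real^'m^'n" and K :: "real^'n^'m"
  assumes "\<kappa> \<ge> 1" "\<gamma> \<le> 1" "strongly_stable \<kappa> \<gamma> A B K"
  shows "spec_norm (mat_pow (A - B ** K) j) \<le> \<kappa>^2 * (1 - \<gamma>)^j"
proof -
  obtain Q L :: "real^'n^'n" where "invertible Q" and similar: "A - B ** K = matrix_inv Q ** L ** Q"
    and "spec_norm L \<le> 1 - \<gamma>" "spec_norm Q \<le> \<kappa>" "spec_norm (matrix_inv Q) \<le> \<kappa>"
    using assms(3) unfolding strongly_stable_def by blast
  show ?thesis
  proof (cases j)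
    case 0
    then show ?thesis
      using order_trans[OF spec_norm_mat_1_le one_le_power[OF assms(1)]]
      by (simp add: mat_pow_def)
  next
    case (Suc j')
    have "Q ** matrix_inv Q = mat 1"
      using \<open>invertible Q\<close> unfolding invertible_def matrix_inv_def
      by (rule someI_ex[THEN conjunct1])
    then have "spec_norm (mat_pow (A - B ** K) j) = spec_norm (matrix_inv Q ** mat_pow L j ** Q)"
      unfolding similar Suc by (simp add: mat_pow_similar)
    also have "\<dots> \<le> spec_norm (matrix_inv Q) * spec_norm (mat_pow L j) * spec_norm Q"
      by (rule spec_norm_matrix_mul3_le)
    also have "\<dots> \<le> \<kappa> * (1 - \<gamma>)^j * \<kappa>"
      using assms \<open>spec_norm L \<le> 1 - \<gamma>\<close> \<open>spec_norm Q \<le> \<kappa>\<close> \<open>spec_norm (matrix_inv Q) \<le> \<kappa>\<close>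
      by (intro mult_mono spec_norm_mat_pow_le spec_norm_nonneg mult_nonneg_nonneg) auto
    finally show ?thesis by (simp add: power2_eq_square mult_ac)
  qed
qed

lemma in_Mset_spec_norm_le:
  fixes M :: "nat \<Rightarrow> real^'n^'m"
  assumes "in_Mset \<kappa> \<gamma> H M" "i \<in> {1..H}"
  shows "spec_norm (M i) \<le> 2 * sqrt (real CARD('m) * real CARD('n)) * \<kappa>^3 * (1 - \<gamma>)^(i-1)"
proof -
  have "inf_norm (M i) \<le> 2 * sqrt (real CARD('n)) * \<kappa>^3 * (1 - \<gamma>)^(i-1)"
    using assms unfolding in_Mset_def by blast
  then have "spec_norm (M i) \<le> sqrt (real CARD('m)) * (2 * sqrt (real CARD('n)) * \<kappa>^3 * (1 - \<gamma>)^(i-1))"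
    using spec_norm_le_sqrt_card_rows_inf_norm[of "M i"]
    by (meson order_trans mult_left_mono real_sqrt_ge_zero of_nat_0_le_iff)
  then show ?thesis by (simp add: real_sqrt_mult mult_ac)
qed

lemma spec_norm_Phi_x_le:
  assumes "0 \<le> c"
    and pow: "\<And>j. spec_norm (mat_pow AK j) \<le> a * c^j"
    and "spec_norm B \<le> b"
    and param: "\<And>s i. i \<in> {1..H} \<Longrightarrow> spec_norm (Ms s i) \<le> \<mu> * c^(i-1)"
  shows "spec_norm (Phi_x AK B H Ms t k)
    \<le> a * c^(k-1) * ind (k \<le> H) + a * b * \<mu> * H * c^(k-2) * ind (k \<ge> 2)"
proof -
  have "0 \<le> a" "0 \<le> b"
    using pow[of 0] \<open>spec_norm B \<le> b\<close> spec_norm_nonneg by (auto intro: order_trans)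
  have summand: "spec_norm (if 1 \<le> k - i \<and> k - i \<le> H \<and> i < k
                     then mat_pow AK (i-1) ** B ** Ms (t - int i) (k - i) else 0)
      \<le> a * b * \<mu> * c^(k-2) * ind (k \<ge> 2)" if "i \<in> {1..H}" for i
  proof (cases "1 \<le> k - i \<and> k - i \<le> H \<and> i < k")
    case True
    have "spec_norm (mat_pow AK (i-1) ** B ** Ms (t - int i) (k - i))
        \<le> (a * c^(i-1)) * b * (\<mu> * c^(k-i-1))"
      using True \<open>0 \<le> a\<close> \<open>0 \<le> b\<close> \<open>0 \<le> c\<close> \<open>spec_norm B \<le> b\<close>
      by (intro order_trans[OF spec_norm_matrix_mul3_le] mult_mono pow param spec_norm_nonneg
          mult_nonneg_nonneg zero_le_power) auto
    also have "\<dots> = a * b * \<mu> * c^(i - 1 + (k - i - 1))"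
      by (simp add: power_add mult_ac)
    also have "i - 1 + (k - i - 1) = k - 2"
      using True that by auto
    finally show ?thesis
      using True that by (simp add: ind_def)
  next
    case False
    have "0 \<le> \<mu>"
      using param[of 1 t] spec_norm_nonneg[of "Ms t 1"] that by auto
    then show ?thesis
      using \<open>0 \<le> a\<close> \<open>0 \<le> b\<close> \<open>0 \<le> c\<close>
      by (subst if_not_P[OF False]) (simp add: ind_def)
  qed
  have "spec_norm (Phi_x AK B H Ms t k)
      \<le> a * c^(k-1) * ind (k \<le> H) + (\<Sum>i\<in>{1..H}. a * b * \<mu> * c^(k-2) * ind (k \<ge> 2))"
    unfolding Phi_x_def spec_norm_if_zero
    using pow[of "k-1"] summand
    by (intro order_trans[OF spec_norm_triangle] add_mono order_trans[OF spec_norm_sum_le]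
        sum_mono) (auto simp: ind_def)
  then show ?thesis by (simp add: mult_ac)
qed

lemma spec_norm_Phi_u_le:
  assumes "1 \<le> k"
    and "spec_norm K \<le> \<kappa>"
    and param: "\<And>s i. i \<in> {1..H} \<Longrightarrow> spec_norm (Ms s i) \<le> \<mu> * c^(i-1)"
    and "spec_norm (Phi_x AK B H Ms t k) \<le> X"
  shows "spec_norm (Phi_u AK B K H Ms t k) \<le> \<mu> * c^(k-1) * ind (k \<le> H) + \<kappa> * X"
  unfolding Phi_u_def
proof (rule order_trans[OF spec_norm_triangle_diff add_mono])
  show "spec_norm (if k \<le> H then Ms t k else 0) \<le> \<mu> * c^(k-1) * ind (k \<le> H)"
    using param[of k t] \<open>1 \<le> k\<close> by (simp add: ind_def)
  have "0 \<le> \<kappa>"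
    using \<open>spec_norm K \<le> \<kappa>\<close> spec_norm_nonneg order_trans by blast
  then show "spec_norm (K ** Phi_x AK B H Ms t k) \<le> \<kappa> * X"
    using assms(2,4) spec_norm_nonneg
    by (intro order_trans[OF spec_norm_matrix_mul_le] mult_mono) auto
qed

theorem lemma13:
  fixes A :: "real^'n^'n" and B :: "real^'m^'n" and K :: "real^'n^'m"
    and \<kappa> \<gamma> :: real and H :: nat and Ms :: "int \<Rightarrow> nat \<Rightarrow> real^'n^'m"
  assumes "\<kappa> \<ge> 1" and "0 < \<gamma>" and "\<gamma> \<le> 1"
    and "strongly_stable \<kappa> \<gamma> A B K"
    and "H \<ge> 1"
    and "\<forall>s. in_Mset \<kappa> \<gamma> H (Ms s)"
  shows "\<forall>t. \<forall>k\<in>{1..2*H}.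
    (let \<kappa>B = max (spec_norm B) 1;
         \<phi> = 2 * \<kappa>^5 * \<kappa>B * sqrt (real CARD('m) * real CARD('n))
     in spec_norm (Phi_x (A - B ** K) B H Ms t k)
          \<le> \<kappa>^2 * (1 - \<gamma>)^(k-1) * ind (k \<le> H) + \<phi> * H * (1 - \<gamma>)^(k-2) * ind (k \<ge> 2)
      \<and> spec_norm (Phi_u (A - B ** K) B K H Ms t k)
          \<le> \<kappa>^3 * (1 - \<gamma>)^(k-1) * ind (k \<le> H) * (2 * sqrt (real CARD('n) * real CARD('m)) + 1)
            + \<kappa> * \<phi> * H * (1 - \<gamma>)^(k-2) * ind (k \<ge> 2))"
proof -
  define \<mu> where "\<mu> = 2 * sqrt (real CARD('m) * real CARD('n)) * \<kappa>^3"
  define \<phi> where "\<phi> = 2 * \<kappa>^5 * max (spec_norm B) 1 * sqrt (real CARD('m) * real CARD('n))"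
  have param: "spec_norm (Ms s i) \<le> \<mu> * (1 - \<gamma>)^(i-1)" if "i \<in> {1..H}" for s i
    using in_Mset_spec_norm_le[OF assms(6)[rule_format] that] by (simp add: \<mu>_def)
  have "\<kappa>^2 * max (spec_norm B) 1 * \<mu> = \<phi>"
    by (simp add: \<mu>_def \<phi>_def power_numeral_reduce)
  moreover have "spec_norm (Phi_x (A - B ** K) B H Ms t k)
      \<le> \<kappa>^2 * (1 - \<gamma>)^(k-1) * ind (k \<le> H) + \<kappa>^2 * max (spec_norm B) 1 * \<mu> * H * (1 - \<gamma>)^(k-2) * ind (k \<ge> 2)"
    for t k
    using assms(3) by (intro spec_norm_Phi_x_le strongly_stable_spec_norm_mat_pow_le[OF assms(1,3,4)] param) auto
  ultimately have Phi_x: "spec_norm (Phi_x (A - B ** K) B H Ms t k)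
      \<le> \<kappa>^2 * (1 - \<gamma>)^(k-1) * ind (k \<le> H) + \<phi> * H * (1 - \<gamma>)^(k-2) * ind (k \<ge> 2)" for t k
    by simp
  have "spec_norm K \<le> \<kappa>"
    using assms(4) unfolding strongly_stable_def by blast
  have Phi_u: "spec_norm (Phi_u (A - B ** K) B K H Ms t k)
      \<le> \<kappa>^3 * (1 - \<gamma>)^(k-1) * ind (k \<le> H) * (2 * sqrt (real CARD('n) * real CARD('m)) + 1)
        + \<kappa> * \<phi> * H * (1 - \<gamma>)^(k-2) * ind (k \<ge> 2)" if "1 \<le> k" for t k
  proof -
    have "spec_norm (Phi_u (A - B ** K) B K H Ms t k)
        \<le> \<mu> * (1 - \<gamma>)^(k-1) * ind (k \<le> H)
          + \<kappa> * (\<kappa>^2 * (1 - \<gamma>)^(k-1) * ind (k \<le> H) + \<phi> * H * (1 - \<gamma>)^(k-2) * ind (k \<ge> 2))"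
      using that \<open>spec_norm K \<le> \<kappa>\<close> param Phi_x by (rule spec_norm_Phi_u_le)
    also have "\<dots> = \<kappa>^3 * (1 - \<gamma>)^(k-1) * ind (k \<le> H) * (2 * sqrt (real CARD('n) * real CARD('m)) + 1)
        + \<kappa> * \<phi> * H * (1 - \<gamma>)^(k-2) * ind (k \<ge> 2)"
      by (simp add: \<mu>_def algebra_simps power_numeral_reduce)
    finally show ?thesis .
  qed
  show ?thesis
    using Phi_x Phi_u unfolding Let_def \<phi>_def by auto
qed

end
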